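(* Let $d\ge 1$, $\mathbf{n}=(n_1,\ldots,n_d)$ be positive integers, and let $\mathbf{M}=\{\mathbf{m}^{(1)},\ldots,\mathbf{m}^{(d)}\}$ be a blocking of $\mathcal{A}\in\mathbb{R}^{n_1\times\cdots\times n_d}$ with $\mathbf{m}^{(k)}=[m^{(k)}_1,\ldots,m^{(k)}_{b_k}]$ for $k=1,\ldots,d$, and write $\mathbf{b}=(b_1,\ldots,b_d)$. For $k=1,\ldots,d$ set $N_k=n_1\cdots n_k$ and $\mathbf{M}_k=\{\mathbf{m}^{(1)},\ldots,\mathbf{m}^{(k)}\}$ (a blocking of tensors of size $n_1\times\cdots\times n_k$), and define \[ Q_k=\begin{cases} I_{N_d} & k=1,\\ I_{N_d/N_k}\otimes \Gamma^{(k)} & 1<k\le d,\end{cases} \] where $N_d/N_k=n_{k+1}\cdots n_d$, $\Gamma^{(k)}=\mathrm{diag}(\Gamma^{(k)}_1,\ldots,\Gamma^{(k)}_{b_k})$, and \[ \Gamma^{(k)}_j=\mathrm{diag}\big(\ldots,\Pi_{\mathrm{vol}_{\mathbf{M}_{k-1}}(\mathbf{i}),\,m^{(k)}_j},\ldots\big)\cdot \Pi_{m^{(k)}_j,\,N_{k-1}}, \] the block diagonal matrix having one diagonal block for each multi-index $\mathbf{1}\le\mathbf{i}\le\mathbf{b}(1:k-1)$, with the diagonal blocks ordered by increasing $\mathrm{ivec}(\mathbf{i},\mathbf{b}(1:k-1))$. Then the permutation matrix $P_{\mathbf{M}}=Q_dQ_{d-1}\cdots Q_2Q_1$ satisfies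 \[ \mathrm{vec}_{\mathbf{M}}(\mathcal{A})=P_{\mathbf{M}}\,\mathrm{vec}(\mathcal{A}). \]
   Context: Multi-index conventions: for integer vectors $\mathbf{i},\mathbf{j}$ of equal length, $\mathbf{i}\le\mathbf{j}$ means componentwise; $\mathbf{1}$ is the all-ones vector; $\mathbf{b}(1:k-1)=(b_1,\ldots,b_{k-1})$. For $\mathbf{n}=(n_1,\ldots,n_d)$ and $\mathbf{1}\le\mathbf{i}\le\mathbf{n}$, $\mathrm{ivec}(\mathbf{i},\mathbf{n})=i_1+(i_2-1)n_1+(i_3-1)n_1n_2+\cdots+(i_d-1)n_1\cdots n_{d-1}$. For $\mathcal{A}\in\mathbb{R}^{n_1\times\cdots\times n_d}$, $\mathrm{vec}(\mathcal{A})\in\mathbb{R}^{n_1\cdots n_d}$ is the column vector with entry $\mathrm{ivec}(\mathbf{i},\mathbf{n})$ equal to $\mathcal{A}(\mathbf{i})$ (for matrices, it stacks columns). Perfect shuffle: for positive integers $q,r$ and $s=qr$, $\Pi_{q,r}\in\mathbb{R}^{s\times s}$ is the permutation matrix with $\Pi_{q,r}z=[z(1:r:s);z(2:r:s);\ldots;z(r:r:s)]$ for $z\in\mathbb{R}^s$, where $a:c:b$ denotes $a,a+c,a+2c,\ldots$ up to $b$. $\otimes$ is the Kronecker product and $\mathrm{diag}(\cdot)$ the block diagonal matrix. A blocking of $\mathcal{A}\in\mathbb{R}^{n_1\times\cdots\times n_d}$ is a collection $\mathbf{M}=\{\mathbf{m}^{(1)},\ldots,\mathbf{m}^{(d)}\}$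 where $\mathbf{m}^{(k)}=[m^{(k)}_1,\ldots,m^{(k)}_{b_k}]$ is a vector of positive integers summing to $n_k$. With $\ell^{(k)}_j=m^{(k)}_1+\cdots+m^{(k)}_{j-1}+1$ and $u^{(k)}_j=m^{(k)}_1+\cdots+m^{(k)}_j$, the block $\mathbf{i}$ ($\mathbf{1}\le\mathbf{i}\le\mathbf{b}$) is $\mathcal{A}_{\mathbf{i}}=\mathcal{A}(\ell^{(1)}_{i_1}:u^{(1)}_{i_1},\ldots,\ell^{(d)}_{i_d}:u^{(d)}_{i_d})$, and $\mathrm{vol}_{\mathbf{M}}(\mathbf{i})=m^{(1)}_{i_1}\cdots m^{(d)}_{i_d}$ (for $\mathbf{M}_0$, the empty blocking, $\mathrm{vol}=1$ and $N_0=1$). $\mathrm{vec}_{\mathbf{M}}(\mathcal{A})$ is the vector obtained by stacking $\mathrm{vec}(\mathcal{A}_{\mathbf{i}})$ over all $\mathbf{1}\le\mathbf{i}\le\mathbf{b}$, in order of increasing $\mathrm{ivec}(\mathbf{i},\mathbf{b})$. *)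

theory Defs
  imports "Jordan_Normal_Form.Matrix"
begin

text \<open>Sizes, multi-indices and blockings are lists; multi-indices are
1-based as in the paper. A tensor of size n = [n_1,...,n_d] is a function
nat list => real, of which only the values on multi-indices 1 <= i <= n matter.
Matrices and vectors are Jordan_Normal_Form matrices/vectors (0-based internally);
entry p (1-based) of the paper corresponds to entry p-1 here.\<close>

definition in_box :: "nat list \<Rightarrow> nat list \<Rightarrow> bool" where
  "in_box i n \<longleftrightarrow> length i = length n \<and> (\<forall>k<length n. 1 \<le> i!k \<and> i!k \<le> n!k)"

definition ivec :: "nat list \<Rightarrow> nat list \<Rightarrow> nat" where
  "ivec i n = 1 + (\<Sum>k<length n. (i!k - 1) * prod_list (take k n))"

text \<open>The multi-index i (1 <= i <= n) with ivec(i,n) = p+1 (inverse of ivec).\<close>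
definition idx_of :: "nat \<Rightarrow> nat list \<Rightarrow> nat list" where
  "idx_of p n = map (\<lambda>k. (p div prod_list (take k n)) mod (n!k) + 1) [0..<length n]"

text \<open>vec(A): the vector of length n_1...n_d whose entry ivec(i,n) is A(i).\<close>
definition tvec :: "(nat list \<Rightarrow> real) \<Rightarrow> nat list \<Rightarrow> real vec" where
  "tvec A n = vec (prod_list n) (\<lambda>p. A (idx_of p n))"

definition is_blocking :: "nat list list \<Rightarrow> nat list \<Rightarrow> bool" where
  "is_blocking M n \<longleftrightarrow> length M = length n \<and>
     (\<forall>k<length n. (\<forall>x\<in>set (M!k). 0 < x) \<and> sum_list (M!k) = n!k)"

definition nblocks :: "nat list list \<Rightarrow> nat list" where
  "nblocks M = map length M"

definition lower :: "nat list list \<Rightarrow> nat \<Rightarrow> nat \<Rightarrow> nat" where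
  "lower M k j = sum_list (take (j - 1) (M!(k - 1))) + 1"

definition bsize :: "nat list list \<Rightarrow> nat list \<Rightarrow> nat list" where
  "bsize M i = map (\<lambda>k. M!k!(i!k - 1)) [0..<length M]"

definition vol :: "nat list list \<Rightarrow> nat list \<Rightarrow> nat" where
  "vol M i = prod_list (bsize M i)"

definition tblock :: "(nat list \<Rightarrow> real) \<Rightarrow> nat list list \<Rightarrow> nat list \<Rightarrow> (nat list \<Rightarrow> real)" where
  "tblock A M i = (\<lambda>j. A (map (\<lambda>k. lower M (Suc k) (i!k) + j!k - 1) [0..<length M]))"

definition vecM :: "(nat list \<Rightarrow> real) \<Rightarrow> nat list list \<Rightarrow> real vec" where
  "vecM A M = vec_of_list (concat (map (\<lambda>p. let i = idx_of p (nblocks M) in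
        list_of_vec (tvec (tblock A M i) (bsize M i))) [0..<prod_list (nblocks M)]))"

text \<open>Perfect shuffle Pi_{q,r}: (Pi z) = [z(1:r:s); z(2:r:s); ...; z(r:r:s)], s = q r.\<close>
definition perfect_shuffle :: "nat \<Rightarrow> nat \<Rightarrow> real mat" where
  "perfect_shuffle q r = mat (q*r) (q*r) (\<lambda>(i,j). if j = i div q + (i mod q) * r then 1 else 0)"

definition kron :: "real mat \<Rightarrow> real mat \<Rightarrow> real mat" where
  "kron A B = mat (dim_row A * dim_row B) (dim_col A * dim_col B)
     (\<lambda>(i,j). A $$ (i div dim_row B, j div dim_col B) * B $$ (i mod dim_row B, j mod dim_col B))"

definition Nk :: "nat list \<Rightarrow> nat \<Rightarrow> nat" where
  "Nk n k = prod_list (take k n)"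

definition Gamma_j :: "nat list \<Rightarrow> nat list list \<Rightarrow> nat \<Rightarrow> nat \<Rightarrow> real mat" where
  "Gamma_j n M k j = (let mkj = M!(k-1)!(j-1); bk = take (k-1) (nblocks M) in
     diag_block_mat (map (\<lambda>p. perfect_shuffle (vol (take (k-1) M) (idx_of p bk)) mkj)
                         [0..<prod_list bk])
     * perfect_shuffle mkj (Nk n (k-1)))"

definition Gamma :: "nat list \<Rightarrow> nat list list \<Rightarrow> nat \<Rightarrow> real mat" where
  "Gamma n M k = diag_block_mat (map (\<lambda>j. Gamma_j n M k j) [1..<length (M!(k-1)) + 1])"

definition Qk :: "nat list \<Rightarrow> nat list list \<Rightarrow> nat \<Rightarrow> real mat" where
  "Qk n M k = (if k = 1 then 1\<^sub>m (Nk n (length n))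
               else kron (1\<^sub>m (Nk n (length n) div Nk n k)) (Gamma n M k))"

fun Qprod :: "nat list \<Rightarrow> nat list list \<Rightarrow> nat \<Rightarrow> real mat" where
  "Qprod n M 0 = 1\<^sub>m (Nk n (length n))"
| "Qprod n M (Suc 0) = Qk n M 1"
| "Qprod n M (Suc (Suc k)) = Qk n M (Suc (Suc k)) * Qprod n M (Suc k)"

definition PM :: "nat list \<Rightarrow> nat list list \<Rightarrow> real mat" where
  "PM n M = Qprod n M (length n)"

end

theory Submission
  imports Defs
begin

text \<open>Write V_k for the list obtained by cutting A into its slices along the modes k+1, ..., d
(taken in ivec order) and stacking the M_k-blocked vectorizations of these order-k tensors.
Then V_0 = vec(A), V_1 = V_0 because blocking a single mode reorders nothing, and V_d = vec_M(A);
so it suffices that Q_(k+1) maps V_k to V_(k+1). Inside one slice, \<Gamma>^(k+1) acts on the n_(k+1)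
consecutive order-k subslices one block row j of mode k+1 at a time: \<Pi>(m_j, N_k) interleaves
the m_j subslices entry by entry, after which the entries of each order-(k+1) block are contiguous
but transposed, and the diagonal factors \<Pi>(vol, m_j) undo this transposition block by block.
Matrices are applied to lists, so that stacking vectors becomes concatenation.\<close>

definition mult_mat_list :: "'a::comm_semiring_1 mat \<Rightarrow> 'a list \<Rightarrow> 'a list" where
  "mult_mat_list B xs = list_of_vec (B *\<^sub>v vec_of_list xs)"

lemma length_mult_mat_list [simp]: "length (mult_mat_list B xs) = dim_row B"
  by (simp add: mult_mat_list_def)

lemma vec_of_list_carrier: "length xs = n \<Longrightarrow> vec_of_list xs \<in> carrier_vec n"
  by (intro carrier_vecI) simp

lemma mult_mat_list_one: "mult_mat_list (1\<^sub>m (length xs)) xs = xs"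
  unfolding mult_mat_list_def one_mult_mat_vec[OF vec_of_list_carrier[OF refl]] list_vec ..

lemma mult_mat_list_mult:
  assumes "B \<in> carrier_mat s s" "C \<in> carrier_mat s s" "length xs = s"
  shows "mult_mat_list (B * C) xs = mult_mat_list B (mult_mat_list C xs)"
  unfolding mult_mat_list_def assoc_mult_mat_vec[OF assms(1,2) vec_of_list_carrier[OF assms(3)]] vec_list ..

lemma vec_of_list_append: "vec_of_list (xs @ ys) = vec_of_list xs @\<^sub>v vec_of_list ys"
  by (rule eq_vecI) (auto simp: vec_of_list_index nth_append)

lemma mult_mat_list_diag_block_mat:
  assumes "\<forall>B\<in>set Bs. dim_row B = dim_col B"
    and "map length xss = map dim_row Bs"
  shows "mult_mat_list (diag_block_mat Bs) (concat xss) = concat (map2 mult_mat_list Bs xss)"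
  using assms
proof (induction Bs arbitrary: xss)
  case Nil
  have "length (mult_mat_list (0\<^sub>m 0 0) []) = 0" by (simp only: length_mult_mat_list index_zero_mat(2))
  then have "mult_mat_list (0\<^sub>m 0 0) [] = []" by (simp only: length_0_conv)
  with Nil show ?case by simp
next
  case (Cons B Bs)
  obtain xs xss' where xss: "xss = xs # xss'" using Cons.prems(2) by (cases xss) simp_all
  let ?D = "diag_block_mat Bs" and ?s = "sum_list (map dim_row Bs)"
  have "map dim_col Bs = map dim_row Bs" using Cons.prems(1) by (simp add: map_eq_conv)
  then have dim_D: "dim_row ?D = ?s" "dim_col ?D = ?s" by (simp_all only: dim_diag_block_mat)
  then have D: "?D \<in> carrier_mat ?s ?s" by (intro carrier_matI)
  have dim_B: "dim_col B = dim_row B" using Cons.prems(1) by simp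
  then have B: "B \<in> carrier_mat (dim_row B) (dim_row B)" by (intro carrier_matI) simp_all
  have lens: "length xs = dim_row B" "map length xss' = map dim_row Bs" using Cons.prems(2) xss by simp_all
  then have len_xss': "length (concat xss') = ?s" by (simp add: length_concat)
  have "mult_mat_list (diag_block_mat (B # Bs)) (concat xss) = mult_mat_list B xs @ mult_mat_list ?D (concat xss')"
    unfolding mult_mat_list_def xss concat.simps vec_of_list_append diag_block_mat.simps Let_def dim_B dim_D
      mult_mat_vec_split[OF B D vec_of_list_carrier[OF lens(1)] vec_of_list_carrier[OF len_xss']]
    by simp
  moreover have "mult_mat_list ?D (concat xss') = concat (map2 mult_mat_list Bs xss')"
    by (rule Cons.IH) (use Cons.prems(1) lens(2) in auto)
  ultimately show ?case using xss by simp
qed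

lemma mult_mat_list_diag_block_mat_upt:
  assumes "\<And>j. j < b \<Longrightarrow> B j \<in> carrier_mat (l j) (l j)" and "\<And>j. j < b \<Longrightarrow> length (xs j) = l j"
  shows "mult_mat_list (diag_block_mat (map B [0..<b])) (concat (map xs [0..<b]))
       = concat (map (\<lambda>j. mult_mat_list (B j) (xs j)) [0..<b])"
proof -
  have dims: "dim_row (B j) = l j" "dim_col (B j) = l j" if "j < b" for j
    using carrier_matD[OF assms(1)[OF that]] by simp_all
  have "mult_mat_list (diag_block_mat (map B [0..<b])) (concat (map xs [0..<b]))
      = concat (map2 mult_mat_list (map B [0..<b]) (map xs [0..<b]))"
    using assms(2) by (intro mult_mat_list_diag_block_mat) (auto simp: dims)
  then show ?thesis by (simp only: map2_map_map)
qed

lemma mult_mat_list_permutation: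
  assumes "\<forall>i<s. f i < s" "length xs = s"
  shows "mult_mat_list (mat s s (\<lambda>(i,j). if j = f i then 1 else 0)) xs = map (\<lambda>i. xs ! f i) [0..<s]"
proof (rule nth_equalityI)
  fix i assume "i < length (mult_mat_list (mat s s (\<lambda>(i, j). if j = f i then 1 else 0)) xs)"
  then have i: "i < s" by simp
  have "mult_mat_list (mat s s (\<lambda>(i, j). if j = f i then 1 else 0)) xs ! i
     = (\<Sum>j\<in>{0..<s}. (if j = f i then 1 else 0) * xs ! j)"
    unfolding mult_mat_list_def using i assms(2)
    by (simp add: list_of_vec_index scalar_prod_def vec_of_list_index)
  also have "\<dots> = xs ! f i" using assms(1) i
    by (simp add: if_distrib[of "\<lambda>x. x * _"] cong: if_cong)
  finally show "mult_mat_list (mat s s (\<lambda>(i, j). if j = f i then 1 else 0)) xs ! i = map (\<lambda>i. xs ! f i) [0..<s] ! i"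
    using i by simp
qed simp

lemma nth_concat_sum_take:
  "p < length xss \<Longrightarrow> u < length (xss!p) \<Longrightarrow>
   concat xss ! (sum_list (map length (take p xss)) + u) = xss!p!u"
proof (induction xss arbitrary: p)
  case (Cons xs xss)
  then show ?case by (cases p) (auto simp: nth_append add.assoc)
qed simp

lemma nth_concat_map_upt:
  assumes "\<And>p. p < P \<Longrightarrow> length (L p) = l p" and "p < P" and "u < l p"
  shows "concat (map L [0..<P]) ! (sum_list (take p (map l [0..<P])) + u) = L p ! u"
proof -
  have "take p (map l [0..<P]) = map length (take p (map L [0..<P]))"
    using assms(1,2) by (simp add: take_map)
  then show ?thesis using nth_concat_sum_take[of p "map L [0..<P]" u] assms by simp
qed

lemma nth_concat_const_length:
  assumes "\<forall>xs\<in>set xss. length xs = r" "a < length xss" "b < r"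
  shows "concat xss ! (a * r + b) = xss!a!b"
proof -
  have "map length (take a xss) = replicate a r"
    using assms(1,2) by (intro replicate_eqI) (auto dest: in_set_takeD)
  then show ?thesis using nth_concat_sum_take[of a xss b] assms by (simp add: sum_list_replicate)
qed

lemma map_upt_sum_list:
  "map f [0..<sum_list ls] =
   concat (map (\<lambda>p. map (\<lambda>u. f (sum_list (take p ls) + u)) [0..<ls!p]) [0..<length ls])"
proof (induction ls arbitrary: f)
  case (Cons l ls)
  have "[0..<sum_list (l # ls)] = [0..<l] @ map (\<lambda>x. l + x) [0..<sum_list ls]"
    by (simp add: upt_add_eq_append[of 0 l] map_add_upt add.commute)
  then have "map f [0..<sum_list (l # ls)] = map f [0..<l] @ map (\<lambda>x. f (l + x)) [0..<sum_list ls]"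
    by simp
  also have "map (\<lambda>x. f (l + x)) [0..<sum_list ls] =
     concat (map (\<lambda>p. map (\<lambda>u. f (sum_list (take p (l#ls)) + u)) [0..<(l#ls)!p]) (map Suc [0..<length ls]))"
    using Cons.IH[of "\<lambda>x. f (l + x)"] by (simp add: add.assoc comp_def)
  finally show ?case
    by (simp only: length_Cons upt_conv_Cons[of 0 "Suc (length ls)"] map_Suc_upt[symmetric])
       (simp add: upt_conv_Cons)
qed simp

lemma map_upt_mult:
  "map f [0..<b*P] = concat (map (\<lambda>j. map (\<lambda>p. f (p + j*P)) [0..<P]) [0..<b])"
proof (induction b)
  case (Suc b)
  have "[0..<Suc b * P] = [0..<b*P] @ [b*P..<b*P + P]"
    using upt_add_eq_append[of 0 "b*P" P] by (simp add: add.commute)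
  also have "[b*P..<b*P + P] = map (\<lambda>p. p + b*P) [0..<P]"
    by (simp add: map_add_upt add.commute)
  finally show ?case using Suc by simp
qed simp

lemma concat_concat_map: "concat (concat (map f xs)) = concat (map (\<lambda>x. concat (f x)) xs)"
  by (induction xs) auto

section \<open>Perfect shuffles and Kronecker products\<close>

lemma perfect_shuffle_carrier: "perfect_shuffle q r \<in> carrier_mat (q*r) (q*r)"
  by (simp add: perfect_shuffle_def)

lemma mult_mat_list_perfect_shuffle:
  assumes len: "\<And>a. a < q \<Longrightarrow> length (X a) = r"
  shows "mult_mat_list (perfect_shuffle q r) (concat (map X [0..<q]))
       = concat (map (\<lambda>b. map (\<lambda>a. X a ! b) [0..<q]) [0..<r])"
proof -
  have rows: "\<forall>xs\<in>set (map X [0..<q]). length xs = r" using len by auto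
  have "map (length \<circ> X) [0..<q] = map (\<lambda>_. r) [0..<q]" using len by (intro map_cong) auto
  then have "length (concat (map X [0..<q])) = q * r"
    unfolding length_concat map_map by (simp only:) (simp add: sum_list_triv)
  moreover have shuffle_bound: "\<forall>i<q*r. i div q + (i mod q)*r < q*r"
  proof (intro allI impI)
    fix i assume i: "i < q*r"
    then have "0 < q" by (cases q) auto
    then have "Suc (i mod q) \<le> q" by (simp add: Suc_leI)
    then have "Suc (i mod q) * r \<le> q * r" by (rule mult_le_mono1)
    moreover have "i div q < r" using i by (simp add: less_mult_imp_div_less mult.commute)
    ultimately show "i div q + (i mod q)*r < q*r" by simp
  qed
  ultimately have "mult_mat_list (perfect_shuffle q r) (concat (map X [0..<q]))
      = map (\<lambda>i. concat (map X [0..<q]) ! (i div q + (i mod q)*r)) [0..<r*q]"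
    unfolding perfect_shuffle_def by (simp add: mult_mat_list_permutation mult.commute)
  also have "\<dots> = concat (map (\<lambda>b. map (\<lambda>a. concat (map X [0..<q]) ! ((a + b*q) div q + ((a + b*q) mod q)*r)) [0..<q]) [0..<r])"
    by (rule map_upt_mult)
  also have "\<dots> = concat (map (\<lambda>b. map (\<lambda>a. X a ! b) [0..<q]) [0..<r])"
    using rows by (intro arg_cong[where f=concat] map_cong refl)
      (simp add: nth_concat_const_length[of _ r] add.commute[of _ "_ * r"])
  finally show ?thesis .
qed

lemma index_kron_one:
  assumes "B \<in> carrier_mat s s" "i < a * s" "j < a * s"
  shows "kron (1\<^sub>m a) B $$ (i, j) = (if i div s = j div s then B $$ (i mod s, j mod s) else 0)"
  using assms by (auto simp: kron_def less_mult_imp_div_less)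

lemma kron_one_carrier: "B \<in> carrier_mat s s \<Longrightarrow> kron (1\<^sub>m a) B \<in> carrier_mat (a*s) (a*s)"
  by (auto simp: kron_def)

lemma kron_one_eq_diag_block_mat:
  assumes B: "B \<in> carrier_mat s s"
  shows "kron (1\<^sub>m a) B = diag_block_mat (replicate a B)"
proof (induction a)
  case 0
  show ?case by (rule eq_matI) (auto simp: kron_def)
next
  case (Suc a)
  let ?D = "diag_block_mat (replicate a B)"
  have D: "?D \<in> carrier_mat (a*s) (a*s)" using kron_one_carrier[OF B, of a] Suc.IH by simp
  have "diag_block_mat (replicate (Suc a) B) = four_block_mat B (0\<^sub>m s (a*s)) (0\<^sub>m (a*s) s) ?D"
    using carrier_matD[OF B] carrier_matD[OF D] by (simp only: replicate_Suc diag_block_mat.simps Let_def)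
  also have "\<dots> = kron (1\<^sub>m (Suc a)) B"
  proof (rule eq_matI)
    fix i j assume "i < dim_row (kron (1\<^sub>m (Suc a)) B)" "j < dim_col (kron (1\<^sub>m (Suc a)) B)"
    then have ij: "i < s + a*s" "j < s + a*s" using B by (auto simp: kron_def)
    then have "0 < s" by (cases s) auto
    then show "four_block_mat B (0\<^sub>m s (a*s)) (0\<^sub>m (a*s) s) ?D $$ (i, j) = kron (1\<^sub>m (Suc a)) B $$ (i, j)"
      using B D ij Suc.IH[symmetric]
      by (auto simp: index_kron_one le_div_geq le_mod_geq div_eq_0_iff)
  qed (use B D in \<open>auto simp: kron_def\<close>)
  finally show ?case ..
qed

lemma mult_mat_list_kron_one:
  assumes B: "B \<in> carrier_mat s s" and "length xss = a" "\<forall>xs\<in>set xss. length xs = s"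
  shows "mult_mat_list (kron (1\<^sub>m a) B) (concat xss) = concat (map (mult_mat_list B) xss)"
proof -
  have "replicate a B = map (\<lambda>_. B) [0..<a]" "xss = map ((!) xss) [0..<a]"
    using assms(2) map_nth[of xss] by (simp_all add: map_replicate_const)
  moreover have "map (mult_mat_list B) xss = map (\<lambda>j. mult_mat_list B (xss ! j)) [0..<a]"
    using assms(2) by (intro nth_equalityI) auto
  ultimately show ?thesis
    using mult_mat_list_diag_block_mat_upt[of a "\<lambda>_. B" "\<lambda>_. s" "(!) xss"] assms
    by (simp add: kron_one_eq_diag_block_mat[OF B])
qed

lemma interleave_concat:
  assumes len: "\<And>s p. p < P \<Longrightarrow> length (L s p) = l p"
  shows "concat (map (\<lambda>t. map (\<lambda>s. concat (map (L s) [0..<P]) ! t) [0..<m]) [0..<sum_list (map l [0..<P])])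
       = concat (map (\<lambda>p. concat (map (\<lambda>u. map (\<lambda>s. L s p ! u) [0..<m]) [0..<l p])) [0..<P])"
proof -
  define off where "off p = sum_list (take p (map l [0..<P]))" for p
  have "concat (map (\<lambda>t. map (\<lambda>s. concat (map (L s) [0..<P]) ! t) [0..<m]) [0..<sum_list (map l [0..<P])])
      = concat (map (\<lambda>p. concat (map (\<lambda>u. map (\<lambda>s. concat (map (L s) [0..<P]) ! (off p + u)) [0..<m])
          [0..<l p])) [0..<P])"
    using map_upt_sum_list[of "\<lambda>t. map (\<lambda>s. concat (map (L s) [0..<P]) ! t) [0..<m]" "map l [0..<P]"]
    by (simp add: off_def concat_concat_map)
      (intro arg_cong[where f=concat] map_cong refl; simp)
  also have "\<dots> = concat (map (\<lambda>p. concat (map (\<lambda>u. map (\<lambda>s. L s p ! u) [0..<m]) [0..<l p])) [0..<P])"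
    by (intro arg_cong[where f=concat] map_cong refl) (simp add: off_def nth_concat_map_upt len)
  finally show ?thesis .
qed

text \<open>\<Gamma>^(k)_j in the abstract: \<open>L s p\<close> is block p of the subslice s.\<close>

lemma mult_mat_list_block_transpose:
  assumes len: "\<And>s p. p < P \<Longrightarrow> length (L s p) = l p"
  shows "mult_mat_list (diag_block_mat (map (\<lambda>p. perfect_shuffle (l p) m) [0..<P])
            * perfect_shuffle m (sum_list (map l [0..<P])))
           (concat (map (\<lambda>s. concat (map (L s) [0..<P])) [0..<m]))
       = concat (map (\<lambda>p. concat (map (\<lambda>s. L s p) [0..<m])) [0..<P])"
proof -
  define N where "N = sum_list (map l [0..<P])"
  define X where "X = (\<lambda>s. concat (map (L s) [0..<P]))"
  define D where "D = diag_block_mat (map (\<lambda>p. perfect_shuffle (l p) m) [0..<P])"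
  have len_X: "length (X s) = N" for s
    unfolding X_def N_def length_concat map_map
    by (intro arg_cong[where f=sum_list] map_cong) (simp_all add: len)
  have "map dim_row (map (\<lambda>p. perfect_shuffle (l p) m) [0..<P]) = map (\<lambda>p. l p * m) [0..<P]"
    "map dim_col (map (\<lambda>p. perfect_shuffle (l p) m) [0..<P]) = map (\<lambda>p. l p * m) [0..<P]"
    by (simp_all add: perfect_shuffle_def)
  then have "dim_row D = N * m" "dim_col D = N * m"
    unfolding D_def N_def by (simp_all only: dim_diag_block_mat sum_list_mult_const)
  then have D: "D \<in> carrier_mat (m*N) (m*N)" by (intro carrier_matI) (simp_all only: mult.commute[of N m])
  have "mult_mat_list (D * perfect_shuffle m N) (concat (map X [0..<m]))
      = mult_mat_list D (mult_mat_list (perfect_shuffle m N) (concat (map X [0..<m])))"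
    using len_X by (intro mult_mat_list_mult[OF D perfect_shuffle_carrier])
      (simp add: length_concat comp_def sum_list_triv)
  also have "mult_mat_list (perfect_shuffle m N) (concat (map X [0..<m]))
      = concat (map (\<lambda>p. concat (map (\<lambda>u. map (\<lambda>s. L s p ! u) [0..<m]) [0..<l p])) [0..<P])"
    using len_X interleave_concat[OF len] by (simp add: mult_mat_list_perfect_shuffle X_def N_def)
  also have "mult_mat_list D \<dots> = concat (map (\<lambda>p. mult_mat_list (perfect_shuffle (l p) m)
                                   (concat (map (\<lambda>u. map (\<lambda>s. L s p ! u) [0..<m]) [0..<l p]))) [0..<P])"
    unfolding D_def
    by (rule mult_mat_list_diag_block_mat_upt) (simp_all add: perfect_shuffle_carrier length_concat comp_def sum_list_triv)
  also have "\<dots> = concat (map (\<lambda>p. concat (map (\<lambda>s. L s p) [0..<m])) [0..<P])"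
  proof (intro arg_cong[where f=concat] map_cong refl)
    fix p assume "p \<in> set [0..<P]"
    then have p: "p < P" by simp
    have "mult_mat_list (perfect_shuffle (l p) m) (concat (map (\<lambda>u. map (\<lambda>s. L s p ! u) [0..<m]) [0..<l p]))
        = concat (map (\<lambda>b. map (\<lambda>a. map (\<lambda>s. L s p ! a) [0..<m] ! b) [0..<l p]) [0..<m])"
      by (rule mult_mat_list_perfect_shuffle) simp
    also have "map (\<lambda>b. map (\<lambda>a. map (\<lambda>s. L s p ! a) [0..<m] ! b) [0..<l p]) [0..<m] = map (\<lambda>s. L s p) [0..<m]"
      by (intro map_cong refl nth_equalityI) (auto simp: len p)
    finally show "mult_mat_list (perfect_shuffle (l p) m) (concat (map (\<lambda>u. map (\<lambda>s. L s p ! u) [0..<m]) [0..<l p]))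
        = concat (map (\<lambda>s. L s p) [0..<m])" .
  qed
  finally show ?thesis unfolding D_def N_def X_def .
qed

section \<open>Multi-indices and blocked vectorization\<close>

lemma length_idx_of [simp]: "length (idx_of p ns) = length ns"
  by (simp add: idx_of_def)

lemma nth_idx_of: "k < length ns \<Longrightarrow> idx_of p ns ! k = p div prod_list (take k ns) mod ns!k + 1"
  by (simp add: idx_of_def)

lemma idx_of_Nil [simp]: "idx_of p [] = []"
  by (simp add: idx_of_def)

lemma idx_of_Cons:
  assumes "a < h"
  shows "idx_of (a + b*h) (h # ns) = Suc a # idx_of b ns"
proof (rule nth_equalityI)
  fix k assume "k < length (idx_of (a + b * h) (h # ns))"
  with assms show "idx_of (a + b * h) (h # ns) ! k = (Suc a # idx_of b ns) ! k"
    by (cases k) (simp_all add: nth_idx_of div_mult2_eq)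
qed simp

lemma idx_of_snoc:
  assumes a: "a < prod_list ns" and b: "b < h"
  shows "idx_of (a + b * prod_list ns) (ns @ [h]) = idx_of a ns @ [Suc b]"
proof (rule nth_equalityI)
  fix k assume "k < length (idx_of (a + b * prod_list ns) (ns @ [h]))"
  then consider "k < length ns" | "k = length ns" by fastforce
  then show "idx_of (a + b * prod_list ns) (ns @ [h]) ! k = (idx_of a ns @ [Suc b]) ! k"
  proof cases
    case 1
    let ?T = "prod_list (take k ns)" and ?R = "prod_list (drop (Suc k) ns)"
    have prod: "prod_list ns = ?T * (ns!k * ?R)"
      using 1 by (metis append_take_drop_id Cons_nth_drop_Suc prod_list.Cons prod_list.append)
    then have T: "?T \<noteq> 0" using a by (metis less_nat_zero_code mult_0)
    have split: "a + b * prod_list ns = a + (b * ?R * ns!k) * ?T" unfolding prod by (simp add: ac_simps)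
    have "(a + b * prod_list ns) div ?T = a div ?T + b * ?R * ns!k"
      unfolding split using T by simp
    then show ?thesis using 1 by (simp add: nth_idx_of nth_append)
  next
    case 2
    then show ?thesis using a b by (simp add: nth_idx_of nth_append)
  qed
qed simp

definition tblock_list :: "(nat list \<Rightarrow> real) \<Rightarrow> nat list list \<Rightarrow> nat list \<Rightarrow> real list" where
  "tblock_list A M i = list_of_vec (tvec (tblock A M i) (bsize M i))"

definition vecM_list :: "(nat list \<Rightarrow> real) \<Rightarrow> nat list list \<Rightarrow> real list" where
  "vecM_list A M = concat (map (\<lambda>p. tblock_list A M (idx_of p (nblocks M))) [0..<prod_list (nblocks M)])"

lemma vecM_eq_vecM_list: "vecM A M = vec_of_list (vecM_list A M)"
  unfolding vecM_def vecM_list_def tblock_list_def Let_def ..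

lemma tblock_list_eq:
  "tblock_list A M i = map (\<lambda>u. A (map (\<lambda>k. lower M (Suc k) (i!k) + idx_of u (bsize M i) ! k - 1)
      [0..<length M])) [0..<vol M i]"
  unfolding tblock_list_def tvec_def tblock_def vol_def by simp

lemma length_tblock_list [simp]: "length (tblock_list A M i) = vol M i"
  by (simp add: tblock_list_eq)

lemma tblock_list_Nil: "tblock_list A [] [] = [A []]"
  by (simp add: tblock_list_eq vol_def bsize_def)

lemma length_bsize [simp]: "length (bsize M i) = length M"
  by (simp add: bsize_def)

lemma bsize_take_Suc:
  assumes "k < length M" "length i = k"
  shows "bsize (take (Suc k) M) (i @ [Suc j]) = bsize (take k M) i @ [M!k!j]"
  using assms by (simp add: bsize_def nth_append)

lemma vol_take_Suc:
  assumes "k < length M" "length i = k"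
  shows "vol (take (Suc k) M) (i @ [Suc j]) = vol (take k M) i * M!k!j"
  using bsize_take_Suc[OF assms] by (simp add: vol_def)

lemma nblocks_take_Suc: "k < length M \<Longrightarrow> nblocks (take (Suc k) M) = nblocks (take k M) @ [length (M!k)]"
  by (simp add: nblocks_def take_Suc_conv_app_nth)

lemma tblock_list_take_Suc:
  assumes k: "k < length M" and i: "length i = k"
  shows "tblock_list A (take (Suc k) M) (i @ [Suc j]) =
    concat (map (\<lambda>s. tblock_list (\<lambda>x. A (x @ [Suc (sum_list (take j (M!k)) + s)])) (take k M) i) [0..<M!k!j])"
proof -
  let ?m = "M!k!j" and ?V = "vol (take k M) i" and ?bs = "bsize (take k M) i"
  let ?pos = "\<lambda>u. map (\<lambda>k'. lower (take k M) (Suc k') (i!k') + idx_of u ?bs ! k' - 1) [0..<k]"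
  let ?F = "\<lambda>u. A (map (\<lambda>k'. lower (take (Suc k) M) (Suc k') ((i @ [Suc j])!k')
                  + idx_of u (bsize (take (Suc k) M) (i @ [Suc j])) ! k' - 1) [0..<Suc k])"
  have "tblock_list A (take (Suc k) M) (i @ [Suc j]) = map ?F [0..<?m * ?V]"
    unfolding tblock_list_eq vol_take_Suc[OF k i] using k by (simp add: mult.commute)
  also have "\<dots> = concat (map (\<lambda>s. map (\<lambda>u. ?F (u + s * ?V)) [0..<?V]) [0..<?m])"
    by (rule map_upt_mult)
  also have "\<dots> = concat (map (\<lambda>s. map (\<lambda>u. A (?pos u @ [Suc (sum_list (take j (M!k)) + s)])) [0..<?V]) [0..<?m])"
  proof (intro arg_cong[where f=concat] map_cong refl)
    fix s u assume "s \<in> set [0..<?m]" "u \<in> set [0..<?V]"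
    then have "idx_of (u + s * ?V) (bsize (take (Suc k) M) (i @ [Suc j])) = idx_of u ?bs @ [Suc s]"
      unfolding bsize_take_Suc[OF k i] using idx_of_snoc[of u ?bs s ?m] by (simp add: vol_def)
    moreover define G where "G = (\<lambda>k'. lower (take (Suc k) M) (Suc k') ((i @ [Suc j])!k')
        + idx_of (u + s * ?V) (bsize (take (Suc k) M) (i @ [Suc j])) ! k' - 1)"
    ultimately have G: "map G [0..<k] = ?pos u" "G k = Suc (sum_list (take j (M!k)) + s)"
      using k i by (auto simp: nth_append lower_def intro: map_cong)
    have "?F (u + s * ?V) = A (map G [0..<k] @ [G k])" by (simp add: G_def)
    then show "?F (u + s * ?V) = A (?pos u @ [Suc (sum_list (take j (M!k)) + s)])" by (simp only: G)
  qed
  also have "\<dots> = concat (map (\<lambda>s. tblock_list (\<lambda>x. A (x @ [Suc (sum_list (take j (M!k)) + s)])) (take k M) i) [0..<?m])"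
    using k by (simp add: tblock_list_eq)
  finally show ?thesis .
qed

lemma vecM_list_take_Suc:
  assumes k: "k < length M"
  shows "vecM_list A (take (Suc k) M) = concat (map (\<lambda>j. concat (map (\<lambda>p.
           tblock_list A (take (Suc k) M) (idx_of p (nblocks (take k M)) @ [Suc j]))
           [0..<prod_list (nblocks (take k M))])) [0..<length (M!k)])"
proof -
  let ?bs = "nblocks (take k M)"
  let ?P = "prod_list ?bs"
  let ?b = "length (M!k)"
  have "vecM_list A (take (Suc k) M) = concat (map (\<lambda>p. tblock_list A (take (Suc k) M) (idx_of p (?bs @ [?b]))) [0..<?b * ?P])"
    unfolding vecM_list_def nblocks_take_Suc[OF k] by (simp add: mult.commute)
  also have "map (\<lambda>p. tblock_list A (take (Suc k) M) (idx_of p (?bs @ [?b]))) [0..<?b * ?P]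
     = concat (map (\<lambda>j. map (\<lambda>p. tblock_list A (take (Suc k) M) (idx_of (p + j * ?P) (?bs @ [?b]))) [0..<?P]) [0..<?b])"
    by (rule map_upt_mult)
  also have "\<dots> = concat (map (\<lambda>j. map (\<lambda>p. tblock_list A (take (Suc k) M) (idx_of p ?bs @ [Suc j])) [0..<?P]) [0..<?b])"
    by (intro arg_cong[where f=concat] map_cong refl) (simp add: idx_of_snoc)
  finally show ?thesis by (simp add: concat_concat_map)
qed

lemma length_vecM_list:
  "length (vecM_list A M) = sum_list (map (\<lambda>p. vol M (idx_of p (nblocks M))) [0..<prod_list (nblocks M)])"
  unfolding vecM_list_def by (simp add: length_concat comp_def)

lemma length_vecM_list_take:
  assumes bl: "is_blocking M n" and k: "k \<le> length n"
  shows "length (vecM_list A (take k M)) = Nk n k"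
  using k
proof (induction k)
  case 0
  then show ?case by (simp add: vecM_list_def nblocks_def tblock_list_eq vol_def bsize_def Nk_def)
next
  case (Suc k)
  have kM: "k < length M" using Suc.prems bl by (simp add: is_blocking_def)
  let ?bs = "nblocks (take k M)"
  have "length (vecM_list A (take (Suc k) M))
      = (\<Sum>j\<leftarrow>[0..<length (M!k)]. \<Sum>p\<leftarrow>[0..<prod_list ?bs]. vol (take k M) (idx_of p ?bs) * M!k!j)"
    unfolding vecM_list_take_Suc[OF kM] using kM
    by (simp add: length_concat comp_def vol_take_Suc nblocks_def)
  also have "\<dots> = (\<Sum>j\<leftarrow>[0..<length (M!k)]. M!k!j * length (vecM_list A (take k M)))"
    unfolding length_vecM_list by (simp add: sum_list_const_mult[symmetric] mult.commute)
  also have "\<dots> = (\<Sum>j\<leftarrow>[0..<length (M!k)]. M!k!j) * Nk n k"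
    using Suc by (simp add: sum_list_mult_const)
  also have "\<dots> = n!k * Nk n k"
    using bl Suc.prems by (simp add: is_blocking_def map_nth)
  also have "\<dots> = Nk n (Suc k)"
    using Suc.prems by (simp add: Nk_def take_Suc_conv_app_nth)
  finally show ?case .
qed

lemma sum_vol_eq_Nk:
  assumes "is_blocking M n" "k \<le> length n"
  shows "sum_list (map (\<lambda>p. vol (take k M) (idx_of p (nblocks (take k M)))) [0..<prod_list (nblocks (take k M))]) = Nk n k"
  using length_vecM_list_take[OF assms, of "\<lambda>_. 0"] by (simp add: length_vecM_list)

section \<open>The factors \<open>\<Gamma>\<close> and \<open>Q\<close>\<close>

lemma Gamma_j_eq:
  assumes "k < length M"
  shows "Gamma_j n M (Suc k) (Suc j) =
    diag_block_mat (map (\<lambda>p. perfect_shuffle (vol (take k M) (idx_of p (nblocks (take k M)))) (M!k!j))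
      [0..<prod_list (nblocks (take k M))]) * perfect_shuffle (M!k!j) (Nk n k)"
  unfolding Gamma_j_def Let_def by (simp add: nblocks_def take_map)

lemma Gamma_j_carrier:
  assumes bl: "is_blocking M n" and k: "k < length n"
  shows "Gamma_j n M (Suc k) (Suc j) \<in> carrier_mat (M!k!j * Nk n k) (M!k!j * Nk n k)"
proof -
  have kM: "k < length M" using bl k by (simp add: is_blocking_def)
  with sum_vol_eq_Nk[OF bl, of k] k show ?thesis
    unfolding Gamma_j_eq[OF kM]
    by (intro mult_carrier_mat[OF _ perfect_shuffle_carrier] carrier_matI)
      (simp_all add: dim_diag_block_mat comp_def perfect_shuffle_def sum_list_mult_const)
qed

lemma mult_mat_list_Gamma_j:
  assumes bl: "is_blocking M n" and k: "k < length n" and j: "j < length (M!k)"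
  shows "mult_mat_list (Gamma_j n M (Suc k) (Suc j)) (concat (map (\<lambda>s.
           vecM_list (\<lambda>x. A (x @ [Suc (sum_list (take j (M!k)) + s)])) (take k M)) [0..<M!k!j]))
       = concat (map (\<lambda>p. tblock_list A (take (Suc k) M) (idx_of p (nblocks (take k M)) @ [Suc j]))
           [0..<prod_list (nblocks (take k M))])"
proof -
  have kM: "k < length M" using bl k by (simp add: is_blocking_def)
  let ?bs = "nblocks (take k M)"
  have "length ?bs = k" using kM by (simp add: nblocks_def)
  then show ?thesis
    using mult_mat_list_block_transpose[where L = "\<lambda>s p. tblock_list (\<lambda>x. A (x @ [Suc (sum_list (take j (M!k)) + s)])) (take k M) (idx_of p ?bs)"
        and l = "\<lambda>p. vol (take k M) (idx_of p ?bs)" and P = "prod_list ?bs" and m = "M!k!j"]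
    by (simp add: Gamma_j_eq[OF kM] sum_vol_eq_Nk[OF bl] k less_imp_le vecM_list_def tblock_list_take_Suc[OF kM])
qed

lemma Gamma_eq: "Gamma n M (Suc k) = diag_block_mat (map (\<lambda>j. Gamma_j n M (Suc k) (Suc j)) [0..<length (M!k)])"
proof -
  have "[1..<length (M!k) + 1] = map Suc [0..<length (M!k)]" by (simp add: map_Suc_upt)
  then show ?thesis unfolding Gamma_def diff_Suc_1 by (simp only: map_map comp_def)
qed

lemma Gamma_carrier:
  assumes bl: "is_blocking M n" and k: "k < length n"
  shows "Gamma n M (Suc k) \<in> carrier_mat (Nk n (Suc k)) (Nk n (Suc k))"
proof -
  have "(\<Sum>j\<leftarrow>[0..<length (M!k)]. M!k!j * Nk n k) = Nk n (Suc k)"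
    using bl k by (simp add: sum_list_mult_const map_nth is_blocking_def Nk_def take_Suc_conv_app_nth)
  moreover have "map dim_row (map (\<lambda>j. Gamma_j n M (Suc k) (Suc j)) [0..<length (M!k)])
              = map (\<lambda>j. M!k!j * Nk n k) [0..<length (M!k)]"
    "map dim_col (map (\<lambda>j. Gamma_j n M (Suc k) (Suc j)) [0..<length (M!k)])
              = map (\<lambda>j. M!k!j * Nk n k) [0..<length (M!k)]"
    using Gamma_j_carrier[OF bl k] by auto
  ultimately show ?thesis unfolding Gamma_eq by (intro carrier_matI) (simp_all only: dim_diag_block_mat)
qed

lemma mult_mat_list_Gamma:
  assumes bl: "is_blocking M n" and k: "k < length n"
  shows "mult_mat_list (Gamma n M (Suc k)) (concat (map (\<lambda>s. vecM_list (\<lambda>x. A (x @ [Suc s])) (take k M)) [0..<n!k]))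
       = vecM_list A (take (Suc k) M)"
proof -
  have kM: "k < length M" using bl k by (simp add: is_blocking_def)
  define Y where "Y = (\<lambda>s. vecM_list (\<lambda>x. A (x @ [Suc s])) (take k M))"
  define off where "off j = sum_list (take j (M!k))" for j
  define b where "b = length (M!k)"
  have "n!k = sum_list (M!k)" using bl k by (simp add: is_blocking_def)
  then have regroup: "concat (map Y [0..<n!k]) = concat (map (\<lambda>j. concat (map (\<lambda>s. Y (off j + s)) [0..<M!k!j])) [0..<b])"
    using map_upt_sum_list[of Y "M!k"] by (simp add: off_def b_def concat_concat_map)
  have len: "length (concat (map (\<lambda>s. Y (off j + s)) [0..<M!k!j])) = M!k!j * Nk n k" for j
    using length_vecM_list_take[OF bl] k by (simp add: Y_def length_concat comp_def sum_list_triv)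
  have "mult_mat_list (Gamma n M (Suc k)) (concat (map Y [0..<n!k]))
     = mult_mat_list (diag_block_mat (map (\<lambda>j. Gamma_j n M (Suc k) (Suc j)) [0..<b]))
         (concat (map (\<lambda>j. concat (map (\<lambda>s. Y (off j + s)) [0..<M!k!j])) [0..<b]))"
    by (simp only: regroup Gamma_eq b_def)
  also have "\<dots> = concat (map (\<lambda>j. mult_mat_list (Gamma_j n M (Suc k) (Suc j)) (concat (map (\<lambda>s. Y (off j + s)) [0..<M!k!j]))) [0..<b])"
    by (rule mult_mat_list_diag_block_mat_upt) (simp_all only: Gamma_j_carrier[OF bl k] len)
  also have "\<dots> = vecM_list A (take (Suc k) M)"
    unfolding vecM_list_take_Suc[OF kM] b_def
    by (intro arg_cong[where f=concat] map_cong refl)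
      (unfold Y_def off_def, rule mult_mat_list_Gamma_j[OF bl k], simp)
  finally show ?thesis unfolding Y_def .
qed

text \<open>The list V_k of the proof idea.\<close>

definition vecM_partial :: "(nat list \<Rightarrow> real) \<Rightarrow> nat list \<Rightarrow> nat list list \<Rightarrow> nat \<Rightarrow> real list" where
  "vecM_partial A n M k = concat (map (\<lambda>t. vecM_list (\<lambda>x. A (x @ idx_of t (drop k n))) (take k M))
     [0..<prod_list (drop k n)])"

lemma vecM_partial_0: "vecM_partial A n M 0 = list_of_vec (tvec A n)"
  by (simp add: vecM_partial_def vecM_list_def nblocks_def tblock_list_Nil tvec_def map_concat comp_def)

lemma vecM_partial_full: "length M = length n \<Longrightarrow> vecM_partial A n M (length n) = vecM_list A M"
  by (simp add: vecM_partial_def)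

lemma vecM_list_take_1:
  assumes bl: "is_blocking M n" and d: "0 < length n"
  shows "vecM_list A (take 1 M) = map (\<lambda>x. A [Suc x]) [0..<n!0]"
proof -
  have M: "0 < length M" using bl d by (simp add: is_blocking_def)
  have "vecM_list A (take 1 M) = concat (map (\<lambda>j. tblock_list A (take 1 M) ([] @ [Suc j])) [0..<length (M!0)])"
    using vecM_list_take_Suc[OF M, of A] by (simp add: nblocks_def)
  also have "\<dots> = concat (map (\<lambda>j. map (\<lambda>s. A [Suc (sum_list (take j (M!0)) + s)]) [0..<M!0!j]) [0..<length (M!0)])"
    using tblock_list_take_Suc[OF M, of "[]" A] by (simp add: tblock_list_Nil)
  also have "\<dots> = map (\<lambda>x. A [Suc x]) [0..<sum_list (M!0)]"
    using map_upt_sum_list[of "\<lambda>x. A [Suc x]" "M!0"] by simp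
  finally show ?thesis using bl d by (simp add: is_blocking_def)
qed

lemma vecM_partial_1:
  assumes bl: "is_blocking M n" and d: "0 < length n"
  shows "vecM_partial A n M 1 = vecM_partial A n M 0"
proof -
  define T where "T = prod_list (drop 1 n)"
  have n: "n = n!0 # drop 1 n" using d by (simp add: Cons_nth_drop_Suc)
  have "vecM_partial A n M 1 = concat (map (\<lambda>t. map (\<lambda>x. A (Suc x # idx_of t (drop 1 n))) [0..<n!0]) [0..<T])"
    unfolding vecM_partial_def T_def vecM_list_take_1[OF bl d] by simp
  also have "\<dots> = concat (map (\<lambda>t. map (\<lambda>x. A (idx_of (x + t * n!0) n)) [0..<n!0]) [0..<T])"
    by (subst (2) n, intro arg_cong[where f=concat] map_cong refl) (simp add: idx_of_Cons)
  also have "\<dots> = map (\<lambda>q. A (idx_of q n)) [0..<T * n!0]"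
    by (rule map_upt_mult[symmetric])
  also have "T * n!0 = prod_list n" unfolding T_def by (subst (3) n) simp
  finally show ?thesis by (simp add: vecM_partial_0 tvec_def)
qed

lemma vecM_partial_Suc:
  assumes bl: "is_blocking M n" and k: "k < length n"
  shows "mult_mat_list (kron (1\<^sub>m (prod_list (drop (Suc k) n))) (Gamma n M (Suc k))) (vecM_partial A n M k)
       = vecM_partial A n M (Suc k)"
proof -
  define T where "T = prod_list (drop (Suc k) n)"
  define S where "S = (\<lambda>t y. A (y @ idx_of t (drop (Suc k) n)))"
  define Y where "Y = (\<lambda>t. concat (map (\<lambda>s. vecM_list (\<lambda>x. S t (x @ [Suc s])) (take k M)) [0..<n!k]))"
  define F where "F = (\<lambda>t. vecM_list (\<lambda>x. A (x @ idx_of t (drop k n))) (take k M))"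
  have drop: "drop k n = n!k # drop (Suc k) n" using k by (simp add: Cons_nth_drop_Suc)
  have "vecM_partial A n M k = concat (map F [0..<T * n!k])"
    unfolding vecM_partial_def T_def F_def drop by (simp add: mult.commute)
  also have "map F [0..<T * n!k] = concat (map (\<lambda>t. map (\<lambda>s. F (s + t * n!k)) [0..<n!k]) [0..<T])"
    by (rule map_upt_mult)
  also have "concat \<dots> = concat (map Y [0..<T])"
    unfolding Y_def S_def F_def concat_concat_map drop
    by (intro arg_cong[where f=concat] map_cong refl) (simp add: idx_of_Cons)
  finally have split: "vecM_partial A n M k = concat (map Y [0..<T])" .
  have "length (Y t) = Nk n (Suc k)" for t
    using length_vecM_list_take[OF bl] k
    by (simp add: Y_def length_concat comp_def sum_list_triv Nk_def take_Suc_conv_app_nth)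
  then have "mult_mat_list (kron (1\<^sub>m T) (Gamma n M (Suc k))) (vecM_partial A n M k)
      = concat (map (\<lambda>t. mult_mat_list (Gamma n M (Suc k)) (Y t)) [0..<T])"
    unfolding split by (subst mult_mat_list_kron_one[OF Gamma_carrier[OF bl k]]) (auto simp: comp_def)
  also have "\<dots> = concat (map (\<lambda>t. vecM_list (S t) (take (Suc k) M)) [0..<T])"
    unfolding Y_def by (intro arg_cong[where f=concat] map_cong refl) (rule mult_mat_list_Gamma[OF bl k])
  also have "\<dots> = vecM_partial A n M (Suc k)"
    by (simp add: S_def T_def vecM_partial_def)
  finally show ?thesis by (simp add: T_def)
qed

lemma prod_list_eq_Nk_mult: "prod_list n = Nk n k * prod_list (drop k n)"
  by (metis Nk_def append_take_drop_id prod_list.append)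

text \<open>Positivity of the n_k is what makes the division N_d / N_k in the definition of \<open>Qk\<close> exact.\<close>

lemma Qk_eq_kron:
  assumes pos: "\<forall>k<length n. 0 < n!k" and k: "0 < k" "k < length n"
  shows "Qk n M (Suc k) = kron (1\<^sub>m (prod_list (drop (Suc k) n))) (Gamma n M (Suc k))"
proof -
  have "0 \<notin> set n" using pos by (auto simp: in_set_conv_nth)
  then have "0 \<notin> set (take (Suc k) n)" by (meson in_set_takeD)
  then have "0 < Nk n (Suc k)" by (metis Nk_def prod_list_zero_iff gr0I)
  then show ?thesis using k prod_list_eq_Nk_mult[of n "Suc k"] by (simp add: Qk_def Nk_def)
qed

lemma mult_mat_list_Qprod:
  assumes bl: "is_blocking M n" and pos: "\<forall>k<length n. 0 < n!k"
  shows "0 < k \<Longrightarrow> k \<le> length n \<Longrightarrow>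
    Qprod n M k \<in> carrier_mat (prod_list n) (prod_list n) \<and>
    mult_mat_list (Qprod n M k) (vecM_partial A n M 0) = vecM_partial A n M k"
proof (induction k rule: nat_induct_non_zero)
  case 1
  have "length (vecM_partial A n M 0) = prod_list n" by (simp add: vecM_partial_0 tvec_def)
  moreover have "0 < length n" using 1 by linarith
  ultimately show ?case using mult_mat_list_one[of "vecM_partial A n M 0"] vecM_partial_1[OF bl]
    by (simp add: Qk_def Nk_def)
next
  case (Suc k)
  have Q: "Qk n M (Suc k) \<in> carrier_mat (prod_list n) (prod_list n)"
    using kron_one_carrier[OF Gamma_carrier[OF bl], of k "prod_list (drop (Suc k) n)"] Suc
    by (simp add: Qk_eq_kron[OF pos] prod_list_eq_Nk_mult[of n "Suc k"] mult.commute)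
  have "length (vecM_partial A n M 0) = prod_list n" by (simp add: vecM_partial_0 tvec_def)
  then show ?case using Suc Q
    by (auto simp: mult_mat_list_mult Qk_eq_kron[OF pos] vecM_partial_Suc[OF bl] gr0_conv_Suc)
qed

theorem theorem3p1:
  fixes n :: "nat list" and M :: "nat list list" and A :: "nat list \<Rightarrow> real"
  assumes "length n \<ge> 1"
    and "\<forall>k<length n. 0 < n!k"
    and "is_blocking M n"
  shows "vecM A M = PM n M *\<^sub>v tvec A n"
proof -
  have "length M = length n" "0 < length n" using assms(1,3) by (auto simp: is_blocking_def)
  then have "mult_mat_list (PM n M) (list_of_vec (tvec A n)) = vecM_list A M"
    using mult_mat_list_Qprod[OF assms(3,2), where k = "length n" and A = A]
    by (simp add: PM_def vecM_partial_0 vecM_partial_full)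
  then show ?thesis
    by (metis mult_mat_list_def vecM_eq_vecM_list vec_list)
qed

end
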